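(* Let $\mathcal{X},\mathcal{Y}$ be finite sets and $p(X,Y)$ a distribution on $\mathcal{X}\times\mathcal{Y}$ with fully supported marginals. If $q\in C(\mathcal{X}\times\mathcal{Y},\mathcal{T})$ solves the IIB problem with parameter $\lambda=D(p(X,Y)\|p(X)p(Y))$, then for all $(x,y)\in\mathcal{S}$ and $t\in\mathcal{T}$, $$q(t|x,y)=\sum_{j=1}^n q(t|\mathcal{T}^q_j)\,\delta_{(x,y)\in\mathcal{S}_j}.$$
   Context: $\mathcal{T}:=\mathbb{N}$; $C(\mathcal{A},\mathcal{B})$ is the set of channels from $\mathcal{A}$ to $\mathcal{B}$. For $\kappa\in C(\mathcal{X}\times\mathcal{Y},\mathcal{T})$ and a distribution $r$ on $\mathcal{X}\times\mathcal{Y}$, $\kappa(r)(t)=\sum_{x,y}\kappa(t|x,y)r(x,y)$; $I_\kappa(X,Y;T)$ is the mutual information under $p(x,y)\kappa(t|x,y)$; $D$ is KL divergence. IIB problem with parameter $\lambda$: minimise $I_\kappa(X,Y;T)$ over $\kappa\in C(\mathcal{X}\times\mathcal{Y},\mathcal{T})$ subject to $D(\kappa(p(X,Y))\|\kappa(p(X)p(Y)))=\lambda$. $q(t)=\sum_{x,y}p(x,y)q(t|x,y)$, $q(A)=\sum_{t\in A}q(t)$, $q(t|A)=\frac{q(t)}{q(A)}\delta_{t\in A}$. $\mathcal{S}=\operatorname{supp}p(X,Y)$; $(x,y)\sim(x',y')$ iff $\frac{p(x,y)}{p(x)p(y)}=\frac{p(x',y')}{p(x')p(y')}$, whose classes contained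 in $\mathcal{S}$ are $\mathcal{S}_1,\dots,\mathcal{S}_n$. $\mathcal{T}^q_j:=\{t\in\mathcal{T}:\exists(x,y)\in\mathcal{S}_j,\ q(t|x,y)>0\}$. *)

theory Defs
  imports "HOL-Analysis.Analysis"
begin

text \<open>Output alphabet T = nat. A distribution on X x Y is a function
  p :: 'a \<times> 'b \<Rightarrow> real on finite types; a channel from X x Y to T is a
  function kappa :: 'a \<times> 'b \<Rightarrow> nat \<Rightarrow> real (kappa z t = kappa(t|z)).\<close>

definition is_distr :: "('a::finite \<times> 'b::finite \<Rightarrow> real) \<Rightarrow> bool" where
  "is_distr p \<longleftrightarrow> (\<forall>z. p z \<ge> 0) \<and> (\<Sum>z\<in>UNIV. p z) = 1"

definition margX :: "('a::finite \<times> 'b::finite \<Rightarrow> real) \<Rightarrow> 'a \<Rightarrow> real" where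
  "margX p x = (\<Sum>y\<in>UNIV. p (x, y))"

definition margY :: "('a::finite \<times> 'b::finite \<Rightarrow> real) \<Rightarrow> 'b \<Rightarrow> real" where
  "margY p y = (\<Sum>x\<in>UNIV. p (x, y))"

definition prod_marg :: "('a::finite \<times> 'b::finite \<Rightarrow> real) \<Rightarrow> 'a \<times> 'b \<Rightarrow> real" where
  "prod_marg p z = margX p (fst z) * margY p (snd z)"

definition channel :: "('a::finite \<times> 'b::finite \<Rightarrow> nat \<Rightarrow> real) \<Rightarrow> bool" where
  "channel \<kappa> \<longleftrightarrow> (\<forall>z t. \<kappa> z t \<ge> 0) \<and> (\<forall>z. ((\<lambda>t. \<kappa> z t) has_sum 1) UNIV)"

definition push :: "('a::finite \<times> 'b::finite \<Rightarrow> nat \<Rightarrow> real) \<Rightarrow> ('a \<times> 'b \<Rightarrow> real) \<Rightarrow> nat \<Rightarrow> real" where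
  "push \<kappa> r t = (\<Sum>z\<in>UNIV. \<kappa> z t * r z)"

text \<open>KL divergence (natural log) of nonnegative functions on a countable type, as an
  extended real: +infinity if P is not absolutely continuous w.r.t. Q or the series
  diverges (its negative part is always summable for distributions); 0 log(0/q) = 0.\<close>
definition kl :: "('c \<Rightarrow> real) \<Rightarrow> ('c \<Rightarrow> real) \<Rightarrow> ereal" where
  "kl P Q = (if (\<exists>z. P z > 0 \<and> Q z = 0) then \<infinity>
             else if (\<lambda>z. P z * ln (P z / Q z)) summable_on UNIV
               then ereal (\<Sum>\<^sub>\<infinity>z. P z * ln (P z / Q z))
             else \<infinity>)"

definition mutual_info :: "('a::finite \<times> 'b::finite \<Rightarrow> real) \<Rightarrow> ('a \<times> 'b \<Rightarrow> nat \<Rightarrow> real) \<Rightarrow> ereal" where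
  "mutual_info p \<kappa> = kl (\<lambda>(z, t). p z * \<kappa> z t) (\<lambda>(z, t). p z * push \<kappa> p t)"

definition iib_solution :: "('a::finite \<times> 'b::finite \<Rightarrow> real) \<Rightarrow> ereal \<Rightarrow> ('a \<times> 'b \<Rightarrow> nat \<Rightarrow> real) \<Rightarrow> bool" where
  "iib_solution p lam q \<longleftrightarrow>
     channel q \<and> kl (push q p) (push q (prod_marg p)) = lam \<and>
     (\<forall>\<kappa>. channel \<kappa> \<and> kl (push \<kappa> p) (push \<kappa> (prod_marg p)) = lam
            \<longrightarrow> mutual_info p q \<le> mutual_info p \<kappa>)"

definition qT :: "('a::finite \<times> 'b::finite \<Rightarrow> real) \<Rightarrow> ('a \<times> 'b \<Rightarrow> nat \<Rightarrow> real) \<Rightarrow> nat \<Rightarrow> real" where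
  "qT p q t = (\<Sum>z\<in>UNIV. p z * q z t)"

definition qSet :: "('a::finite \<times> 'b::finite \<Rightarrow> real) \<Rightarrow> ('a \<times> 'b \<Rightarrow> nat \<Rightarrow> real) \<Rightarrow> nat set \<Rightarrow> real" where
  "qSet p q A = (\<Sum>\<^sub>\<infinity>t\<in>A. qT p q t)"

definition qCond :: "('a::finite \<times> 'b::finite \<Rightarrow> real) \<Rightarrow> ('a \<times> 'b \<Rightarrow> nat \<Rightarrow> real) \<Rightarrow> nat set \<Rightarrow> nat \<Rightarrow> real" where
  "qCond p q A t = (if t \<in> A then qT p q t / qSet p q A else 0)"

definition supp :: "('a::finite \<times> 'b::finite \<Rightarrow> real) \<Rightarrow> ('a \<times> 'b) set" where
  "supp p = {z. p z > 0}"

definition ratio_rel :: "('a::finite \<times> 'b::finite \<Rightarrow> real) \<Rightarrow> (('a \<times> 'b) \<times> ('a \<times> 'b)) set" where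
  "ratio_rel p = {(z, z'). p z / prod_marg p z = p z' / prod_marg p z'}"

definition supp_classes :: "('a::finite \<times> 'b::finite \<Rightarrow> real) \<Rightarrow> ('a \<times> 'b) set set" where
  "supp_classes p = {C \<in> UNIV // ratio_rel p. C \<subseteq> supp p}"

definition Tq :: "('a::finite \<times> 'b::finite \<Rightarrow> nat \<Rightarrow> real) \<Rightarrow> ('a \<times> 'b) set \<Rightarrow> nat set" where
  "Tq q C = {t. \<exists>z\<in>C. q z t > 0}"

end

theory Submission
  imports Defs
begin

(* Since D(q(p) || q(p(X)p(Y))) = D(p || p(X)p(Y)), the log-sum inequality, which is the
   data-processing inequality output by output, holds with equality at every output t;
   hence all (x,y) with q(t|x,y) > 0 share the same ratio p(x,y) / (p(x)p(y)), and the
   output sets T^q_j of the classes S_j are disjoint.  Replacing q(.|x,y) on each S_j by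
   q(.|T^q_j) therefore leaves both output laws q(p(X,Y)) and q(p(X)p(Y)) unchanged, so the
   new channel is feasible, and its mutual information is -sum p(x,y) ln q(T^q_j).  The
   tangent-line bound x ln(x/y) >= x ln c + x - c y shows that the mutual information of q
   is at least this value, with equality only if q already has the new form. *)

lemma has_sum_diff:
  fixes f g :: "'a \<Rightarrow> 'b::topological_ab_group_add"
  assumes "(f has_sum a) A" and "(g has_sum b) A"
  shows "((\<lambda>x. f x - g x) has_sum (a - b)) A"
proof -
  have "((\<lambda>x. - g x) has_sum - b) A"
    using assms(2) by (simp add: has_sum_uminus)
  from has_sum_add[OF assms(1) this] show ?thesis by simp
qed

lemma has_sum_sum:
  fixes f :: "'i \<Rightarrow> 'a \<Rightarrow> 'b::topological_comm_monoid_add"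
  assumes "finite I" and "\<And>i. i \<in> I \<Longrightarrow> (f i has_sum s i) A"
  shows "((\<lambda>x. \<Sum>i\<in>I. f i x) has_sum (\<Sum>i\<in>I. s i)) A"
  using assms by (induction I rule: finite_induct) (auto intro: has_sum_add)

lemma has_sum_Sigma_finite:
  fixes f :: "'a \<times> 'b \<Rightarrow> 'c::topological_comm_monoid_add"
  assumes "finite A" and "\<And>x. x \<in> A \<Longrightarrow> ((\<lambda>y. f (x, y)) has_sum g x) (B x)"
  shows "(f has_sum (\<Sum>x\<in>A. g x)) (Sigma A B)"
  using assms
proof (induction A rule: finite_induct)
  case empty
  then show ?case by simp
next
  case (insert x A)
  have "(f has_sum g x) (Pair x ` B x)"
    using insert.prems by (subst has_sum_reindex) (auto simp: inj_on_def o_def)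
  moreover have "Sigma (insert x A) B = Pair x ` B x \<union> Sigma A B" by auto
  ultimately show ?case
    using insert by (auto intro!: has_sum_Un_disjoint)
qed

lemma x_ln_div_tangent_gap:
  fixes x y c :: real
  assumes "0 < x" "0 < y" "0 < c"
  shows "x * ln (x / y) - (x * ln c + x - c * y) = x * (c * y / x - 1 - ln (c * y / x))"
  using assms by (simp add: ln_div ln_mult algebra_simps)

lemma x_ln_div_ge_tangent:
  fixes x y c :: real
  assumes "0 \<le> x" "0 < y" "0 < c"
  shows "x * ln c + x - c * y \<le> x * ln (x / y)"
proof (cases "x = 0")
  case True
  then show ?thesis using assms by simp
next
  case False
  with assms have "0 < x" by simp
  with assms have "0 \<le> x * (c * y / x - 1 - ln (c * y / x))"
    using ln_le_minus_one[of "c * y / x"] by simp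
  then show ?thesis using x_ln_div_tangent_gap[OF \<open>0 < x\<close> assms(2,3)] by simp
qed

lemma x_ln_div_eq_tangentD:
  fixes x y c :: real
  assumes "0 \<le> x" "0 < y" "0 < c" and "x * ln (x / y) = x * ln c + x - c * y"
  shows "x = c * y"
proof (cases "x = 0")
  case True
  then show ?thesis using assms by simp
next
  case False
  with assms have "0 < x" by simp
  with assms have "c * y / x - 1 - ln (c * y / x) = 0"
    using x_ln_div_tangent_gap[OF \<open>0 < x\<close> assms(2,3)] by simp
  then have "c * y / x = 1"
    using ln_eq_minus_one[of "c * y / x"] \<open>0 < x\<close> assms by simp
  then show ?thesis using \<open>0 < x\<close> by simp
qed

lemma log_sum_denominator_pos:
  fixes w p Q :: "'z \<Rightarrow> real"
  assumes "finite A" and w: "\<And>z. z \<in> A \<Longrightarrow> 0 \<le> w z" and Q: "\<And>z. z \<in> A \<Longrightarrow> 0 < Q z"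
    and "0 < (\<Sum>z\<in>A. w z * p z)"
  shows "0 < (\<Sum>z\<in>A. w z * Q z)"
proof -
  have "(\<Sum>z\<in>A. w z * p z) \<noteq> 0"
    using \<open>0 < (\<Sum>z\<in>A. w z * p z)\<close> by simp
  then obtain z0 where "z0 \<in> A" "w z0 * p z0 \<noteq> 0"
    by (meson sum.neutral)
  with w have "0 < w z0" by (simp add: less_le)
  with \<open>z0 \<in> A\<close> show ?thesis
    using \<open>finite A\<close> w Q by (intro sum_pos2[of _ z0]) (auto intro: mult_nonneg_nonneg less_imp_le)
qed

lemma log_sum_gap:
  fixes w p Q :: "'z \<Rightarrow> real" and A :: "'z set" and c :: real
  defines "a \<equiv> \<Sum>z\<in>A. w z * p z" and "b \<equiv> \<Sum>z\<in>A. w z * Q z"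
  shows "(\<Sum>z\<in>A. w z * (p z * ln (p z / Q z) - (p z * ln c + p z - c * Q z)))
    = (\<Sum>z\<in>A. w z * p z * ln (p z / Q z)) - (a * ln c + a - c * b)"
  unfolding a_def b_def
  by (simp add: sum_subtractf sum.distrib sum_distrib_left sum_distrib_right algebra_simps)

lemma log_sum_inequality:
  fixes w p Q :: "'z \<Rightarrow> real"
  assumes A: "finite A"
    and w: "\<And>z. z \<in> A \<Longrightarrow> 0 \<le> w z" and p: "\<And>z. z \<in> A \<Longrightarrow> 0 \<le> p z"
    and Q: "\<And>z. z \<in> A \<Longrightarrow> 0 < Q z"
  defines "a \<equiv> \<Sum>z\<in>A. w z * p z" and "b \<equiv> \<Sum>z\<in>A. w z * Q z"
  shows "a * ln (a / b) \<le> (\<Sum>z\<in>A. w z * p z * ln (p z / Q z))"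
proof (cases "a = 0")
  case True
  then have "w z * p z = 0" if "z \<in> A" for z
    using A w p that unfolding a_def by (subst (asm) sum_nonneg_eq_0_iff) auto
  with True show ?thesis by (simp add: sum.neutral)
next
  case False
  moreover have "0 \<le> a"
    unfolding a_def using w p by (intro sum_nonneg) simp
  ultimately have "0 < a" by simp
  then have "0 < b"
    using log_sum_denominator_pos[OF A w Q] by (simp add: a_def b_def)
  define c where "c = a / b"
  have "0 < c" and "c * b = a"
    using \<open>0 < a\<close> \<open>0 < b\<close> by (simp_all add: c_def)
  have "0 \<le> (\<Sum>z\<in>A. w z * (p z * ln (p z / Q z) - (p z * ln c + p z - c * Q z)))"
    using w p Q \<open>0 < c\<close> by (intro sum_nonneg mult_nonneg_nonneg) (simp_all add: x_ln_div_ge_tangent)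
  then show ?thesis
    using log_sum_gap[of w p Q c A, folded a_def b_def] \<open>c * b = a\<close> by (simp add: c_def)
qed

lemma log_sum_eq_imp_ratio_eq:
  fixes w p Q :: "'z \<Rightarrow> real"
  assumes A: "finite A"
    and w: "\<And>z. z \<in> A \<Longrightarrow> 0 \<le> w z" and p: "\<And>z. z \<in> A \<Longrightarrow> 0 \<le> p z"
    and Q: "\<And>z. z \<in> A \<Longrightarrow> 0 < Q z"
  defines "a \<equiv> \<Sum>z\<in>A. w z * p z" and "b \<equiv> \<Sum>z\<in>A. w z * Q z"
  assumes eq: "a * ln (a / b) = (\<Sum>z\<in>A. w z * p z * ln (p z / Q z))"
    and "z \<in> A" and "0 < w z"
  shows "p z / Q z = a / b"
proof (cases "a = 0")
  case True
  then have "w z * p z = 0"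
    using A w p \<open>z \<in> A\<close> unfolding a_def by (subst (asm) sum_nonneg_eq_0_iff) auto
  with True \<open>0 < w z\<close> show ?thesis by simp
next
  case False
  moreover have "0 \<le> a"
    unfolding a_def using w p by (intro sum_nonneg) simp
  ultimately have "0 < a" by simp
  then have "0 < b"
    using log_sum_denominator_pos[OF A w Q] by (simp add: a_def b_def)
  define c where "c = a / b"
  have "0 < c" and "c * b = a"
    using \<open>0 < a\<close> \<open>0 < b\<close> by (simp_all add: c_def)
  define gap where "gap z = w z * (p z * ln (p z / Q z) - (p z * ln c + p z - c * Q z))" for z
  have gap_nonneg: "0 \<le> gap z" if "z \<in> A" for z
    unfolding gap_def using w p Q that \<open>0 < c\<close> by (simp add: x_ln_div_ge_tangent)
  have "(\<Sum>z\<in>A. gap z) = 0"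
    using log_sum_gap[of w p Q c A, folded a_def b_def] eq \<open>c * b = a\<close>
    by (simp add: gap_def c_def)
  then have "gap z = 0"
    using sum_nonneg_eq_0_iff[OF A] gap_nonneg \<open>z \<in> A\<close> by blast
  then have "p z * ln (p z / Q z) = p z * ln c + p z - c * Q z"
    using \<open>0 < w z\<close> by (simp add: gap_def)
  then have "p z = c * Q z"
    using p Q \<open>z \<in> A\<close> \<open>0 < c\<close> by (intro x_ln_div_eq_tangentD) auto
  then show ?thesis
    using Q[OF \<open>z \<in> A\<close>] by (simp add: c_def)
qed

lemma kl_pos_finite:
  fixes P Q :: "'z::finite \<Rightarrow> real"
  assumes "\<And>z. 0 < Q z"
  shows "kl P Q = ereal (\<Sum>z\<in>UNIV. P z * ln (P z / Q z))"
  using assms by (auto simp: kl_def infsum_finite less_le)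

lemma kl_eq_ereal_if_has_sum:
  assumes "\<not> (\<exists>z. 0 < P z \<and> Q z = 0)" and "((\<lambda>z. P z * ln (P z / Q z)) has_sum S) UNIV"
  shows "kl P Q = ereal S"
  using assms by (simp add: kl_def has_sum_iff)

lemma kl_le_ereal_imp_summable:
  assumes "kl P Q \<le> ereal M"
  shows "(\<lambda>z. P z * ln (P z / Q z)) summable_on UNIV"
    and "(\<Sum>\<^sub>\<infinity>z. P z * ln (P z / Q z)) \<le> M"
  using assms by (auto simp: kl_def split: if_splits)

lemma kl_push_eq_imp_ratio_eq:
  fixes p Q :: "'a::finite \<times> 'b::finite \<Rightarrow> real" and \<kappa> :: "'a \<times> 'b \<Rightarrow> nat \<Rightarrow> real"
  assumes \<kappa>: "channel \<kappa>" and p: "\<And>z. 0 \<le> p z" and Q: "\<And>z. 0 < Q z"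
    and eq: "kl (push \<kappa> p) (push \<kappa> Q) = kl p Q" and pos: "0 < \<kappa> z t"
  shows "p z / Q z = push \<kappa> p t / push \<kappa> Q t"
proof -
  have \<kappa>_nonneg: "\<And>z t. 0 \<le> \<kappa> z t" and \<kappa>_sum: "\<And>z. ((\<lambda>t. \<kappa> z t) has_sum 1) UNIV"
    using \<kappa> by (auto simp: channel_def)
  define D where "D = (\<Sum>z\<in>UNIV. p z * ln (p z / Q z))"
  define h where "h t = push \<kappa> p t * ln (push \<kappa> p t / push \<kappa> Q t)" for t
  define g where "g t = (\<Sum>z\<in>UNIV. \<kappa> z t * p z * ln (p z / Q z))" for t
  have "(h has_sum D) UNIV"
  proof -
    have "kl (push \<kappa> p) (push \<kappa> Q) = ereal D"
      using eq Q by (simp add: kl_pos_finite D_def)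
    then show ?thesis
      unfolding kl_def h_def has_sum_iff by (auto split: if_splits)
  qed
  moreover have "(g has_sum D) UNIV"
  proof -
    have "((\<lambda>t. \<Sum>z\<in>UNIV. \<kappa> z t * (p z * ln (p z / Q z)))
            has_sum (\<Sum>z\<in>UNIV. 1 * (p z * ln (p z / Q z)))) UNIV"
      by (intro has_sum_sum has_sum_cmult_left \<kappa>_sum) simp
    then show ?thesis unfolding g_def D_def by (simp add: mult.assoc)
  qed
  ultimately have gap_sum: "((\<lambda>t. g t - h t) has_sum 0) UNIV"
    using has_sum_diff by fastforce
  have gap_nonneg: "0 \<le> g t - h t" for t
    unfolding g_def h_def push_def
    using log_sum_inequality[of UNIV "\<lambda>z. \<kappa> z t" p Q] \<kappa>_nonneg p Q by simp
  have "g t - h t = 0"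
    using nonneg_has_sum_le_0D[OF gap_sum order_refl gap_nonneg UNIV_I] by simp
  then have "push \<kappa> p t * ln (push \<kappa> p t / push \<kappa> Q t)
      = (\<Sum>z\<in>UNIV. \<kappa> z t * p z * ln (p z / Q z))"
    by (simp add: g_def h_def)
  then show ?thesis
    unfolding push_def
    by (intro log_sum_eq_imp_ratio_eq[where w="\<lambda>z. \<kappa> z t"]) (simp_all add: \<kappa>_nonneg p Q pos)
qed

lemma equiv_ratio_rel: "equiv UNIV (ratio_rel p)"
  by (auto simp: equiv_def refl_on_def sym_def trans_def ratio_rel_def)

lemma ratio_rel_pos_iff:
  assumes "\<And>z. 0 < prod_marg p z" and "(z, z') \<in> ratio_rel p"
  shows "0 < p z \<longleftrightarrow> 0 < p z'"
proof -
  have "0 < p z \<longleftrightarrow> 0 < p z / prod_marg p z" for z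
    using assms(1)[of z] by (simp add: zero_less_divide_iff)
  then show ?thesis using assms(2) by (simp add: ratio_rel_def)
qed

lemma sum_supp_classes_indicator:
  fixes p :: "'a::finite \<times> 'b::finite \<Rightarrow> real" and f :: "('a \<times> 'b) set \<Rightarrow> real"
  assumes marg: "\<And>z. 0 < prod_marg p z" and "z \<in> supp p"
  shows "(\<Sum>C\<in>supp_classes p. f C * (if z \<in> C then 1 else 0)) = f (ratio_rel p `` {z})"
proof -
  have "ratio_rel p `` {z} \<subseteq> supp p"
    using \<open>z \<in> supp p\<close> ratio_rel_pos_iff[OF marg] by (auto simp: supp_def)
  then have class_z: "ratio_rel p `` {z} \<in> supp_classes p"
    unfolding supp_classes_def by (auto intro: quotientI)
  have unique: "C = ratio_rel p `` {z}" if "C \<in> supp_classes p" "z \<in> C" for C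
  proof -
    from \<open>C \<in> supp_classes p\<close> have "C \<in> UNIV // ratio_rel p"
      by (simp add: supp_classes_def)
    then obtain x where C: "C = ratio_rel p `` {x}"
      by (rule quotientE)
    with \<open>z \<in> C\<close> have "(x, z) \<in> ratio_rel p" by simp
    then have "ratio_rel p `` {x} = ratio_rel p `` {z}"
      by (rule equiv_class_eq[OF equiv_ratio_rel])
    with C show ?thesis by (rule trans)
  qed
  have "z \<in> C \<longleftrightarrow> C = ratio_rel p `` {z}" if "C \<in> supp_classes p" for C
    using unique[OF that] equiv_class_self[OF equiv_ratio_rel] by blast
  then have "(\<Sum>C\<in>supp_classes p. f C * (if z \<in> C then 1 else 0))
      = (\<Sum>C\<in>supp_classes p. if C = ratio_rel p `` {z} then f C else 0)"
    by (intro sum.cong) simp_all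
  also have "\<dots> = f (ratio_rel p `` {z})"
    using class_z by (simp add: sum.delta')
  finally show ?thesis .
qed

lemma qT_eq_push: "qT p q t = push q p t"
  by (simp add: qT_def push_def mult.commute)

locale ratio_determined_channel =
  fixes p :: "'a::finite \<times> 'b::finite \<Rightarrow> real" and q :: "'a \<times> 'b \<Rightarrow> nat \<Rightarrow> real"
  assumes p_nonneg: "\<And>z. 0 \<le> p z"
    and prod_marg_pos: "\<And>z. 0 < prod_marg p z"
    and channel_q: "channel q"
    and common_output_ratio_rel: "\<And>z z' t. 0 < q z t \<Longrightarrow> 0 < q z' t \<Longrightarrow> (z, z') \<in> ratio_rel p"
begin

abbreviation ratio_class :: "'a \<times> 'b \<Rightarrow> ('a \<times> 'b) set" where
  "ratio_class z \<equiv> ratio_rel p `` {z}"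

definition class_mass :: "'a \<times> 'b \<Rightarrow> real" where
  "class_mass z = (\<Sum>z'\<in>ratio_class z. p z')"

definition collapsed :: "'a \<times> 'b \<Rightarrow> nat \<Rightarrow> real" where
  "collapsed z t = (if 0 < p z then qCond p q (Tq q (ratio_class z)) t else q z t)"

lemma q_nonneg: "0 \<le> q z t"
  and q_has_sum: "((\<lambda>t. q z t) has_sum 1) UNIV"
  using channel_q unfolding channel_def by blast+

lemma ratio_class_eq: "z' \<in> ratio_class z \<Longrightarrow> ratio_class z' = ratio_class z"
  by (auto simp: ratio_rel_def)

lemma mem_ratio_class_sym: "z' \<in> ratio_class z \<Longrightarrow> z \<in> ratio_class z'"
  by (simp add: ratio_rel_def)

lemma pos_iff_mem_ratio_class: "z' \<in> ratio_class z \<Longrightarrow> 0 < p z \<longleftrightarrow> 0 < p z'"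
  using ratio_rel_pos_iff[OF prod_marg_pos] by simp

lemma mem_ratio_class_if_common_output: "0 < q z t \<Longrightarrow> 0 < q z' t \<Longrightarrow> z' \<in> ratio_class z"
  by (simp add: common_output_ratio_rel)

lemma q_eq_0_if_not_mem_ratio_class:
  assumes "0 < q z0 t" and "z \<notin> ratio_class z0"
  shows "q z t = 0"
proof -
  have "\<not> 0 < q z t"
    using assms mem_ratio_class_if_common_output by blast
  then show ?thesis using q_nonneg[of z t] by simp
qed

lemma mem_ratio_class_if_output_in_Tq:
  assumes "t \<in> Tq q (ratio_class z)" and "0 < q z' t"
  shows "z' \<in> ratio_class z"
proof -
  from assms(1) obtain z'' where "z'' \<in> ratio_class z" "0 < q z'' t"
    by (auto simp: Tq_def)
  with assms(2) show ?thesis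
    using mem_ratio_class_if_common_output ratio_class_eq by blast
qed

lemma q_eq_0_if_not_in_Tq: "z' \<in> ratio_class z \<Longrightarrow> t \<notin> Tq q (ratio_class z) \<Longrightarrow> q z' t = 0"
  using q_nonneg[of z' t] by (auto simp: Tq_def less_le)

lemma qT_nonneg: "0 \<le> qT p q t"
  unfolding qT_def by (intro sum_nonneg mult_nonneg_nonneg p_nonneg q_nonneg)

lemma mult_le_qT: "p z * q z t \<le> qT p q t"
  unfolding qT_def by (rule member_le_sum) (simp_all add: p_nonneg q_nonneg)

lemma qT_eq_sum_ratio_class:
  assumes "0 < q z0 t"
  shows "qT p q t = (\<Sum>z\<in>ratio_class z0. p z * q z t)"
  unfolding qT_def
  by (intro sum.mono_neutral_right) (auto simp: q_eq_0_if_not_mem_ratio_class[OF assms])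

lemma qT_has_sum_class_mass: "(qT p q has_sum class_mass z) (Tq q (ratio_class z))"
proof -
  have "((\<lambda>t. \<Sum>z'\<in>ratio_class z. p z' * q z' t) has_sum (\<Sum>z'\<in>ratio_class z. p z' * 1)) UNIV"
    by (intro has_sum_sum has_sum_cmult_right q_has_sum) simp
  moreover have "((\<lambda>t. \<Sum>z'\<in>ratio_class z. p z' * q z' t) has_sum class_mass z) UNIV
      \<longleftrightarrow> (qT p q has_sum class_mass z) (Tq q (ratio_class z))"
  proof (rule has_sum_cong_neutral)
    show "(\<Sum>z'\<in>ratio_class z. p z' * q z' t) = 0" if "t \<in> UNIV - Tq q (ratio_class z)" for t
      using that q_eq_0_if_not_in_Tq by simp
    show "(\<Sum>z'\<in>ratio_class z. p z' * q z' t) = qT p q t" if "t \<in> UNIV \<inter> Tq q (ratio_class z)" for t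
    proof -
      from that obtain z'' where "z'' \<in> ratio_class z" "0 < q z'' t"
        by (auto simp: Tq_def)
      then show ?thesis
        using qT_eq_sum_ratio_class ratio_class_eq by metis
    qed
  qed simp
  ultimately show ?thesis by (simp add: class_mass_def)
qed

lemma qSet_ratio_class: "qSet p q (Tq q (ratio_class z)) = class_mass z"
  unfolding qSet_def using qT_has_sum_class_mass by (rule infsumI)

lemma class_mass_pos: "0 < p z \<Longrightarrow> 0 < class_mass z"
  unfolding class_mass_def
  by (rule sum_pos2[of _ z]) (auto simp: ratio_rel_def intro: p_nonneg)

lemma qT_pos: "0 < p z \<Longrightarrow> t \<in> Tq q (ratio_class z) \<Longrightarrow> 0 < qT p q t"
proof -
  assume "0 < p z" "t \<in> Tq q (ratio_class z)"
  then obtain z' where "z' \<in> ratio_class z" "0 < q z' t"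
    by (auto simp: Tq_def)
  with \<open>0 < p z\<close> have "0 < p z' * q z' t"
    using pos_iff_mem_ratio_class by simp
  then show "0 < qT p q t"
    using mult_le_qT[of z' t] by linarith
qed

lemma collapsed_pos:
  "0 < p z \<Longrightarrow> collapsed z t = (if t \<in> Tq q (ratio_class z) then qT p q t / class_mass z else 0)"
  by (simp add: collapsed_def qCond_def qSet_ratio_class)

lemma channel_collapsed: "channel collapsed"
  unfolding channel_def
proof (intro conjI allI)
  fix z t
  show "0 \<le> collapsed z t"
  proof (cases "0 < p z")
    case True
    then show ?thesis
      using class_mass_pos[OF True] qT_nonneg by (simp add: collapsed_pos)
  next
    case False
    then show ?thesis by (simp add: collapsed_def q_nonneg)
  qed
next
  fix z
  show "((\<lambda>t. collapsed z t) has_sum 1) UNIV"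
  proof (cases "0 < p z")
    case True
    have "((\<lambda>t. qT p q t / class_mass z) has_sum (class_mass z / class_mass z)) (Tq q (ratio_class z))"
      by (intro has_sum_divide_const qT_has_sum_class_mass)
    then have "((\<lambda>t. qT p q t / class_mass z) has_sum 1) (Tq q (ratio_class z))"
      using class_mass_pos[OF True] by simp
    then show ?thesis
      by (subst has_sum_cong_neutral[where T="Tq q (ratio_class z)"]) (auto simp: collapsed_pos[OF True])
  next
    case False
    then show ?thesis using q_has_sum by (simp add: collapsed_def)
  qed
qed

lemma collapsed_has_sum: "((\<lambda>t. collapsed z t) has_sum 1) UNIV"
  using channel_collapsed unfolding channel_def by blast

lemma collapsed_at_unreached_output:
  assumes "\<And>z'. 0 < p z' \<Longrightarrow> q z' t = 0"
  shows "collapsed z t = q z t"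
proof (cases "0 < p z")
  case True
  have "t \<notin> Tq q (ratio_class z)"
  proof
    assume "t \<in> Tq q (ratio_class z)"
    then obtain z' where z': "z' \<in> ratio_class z" "0 < q z' t"
      by (auto simp: Tq_def)
    from True have "0 < p z'"
      using pos_iff_mem_ratio_class[OF z'(1)] by simp
    with assms z'(2) show False by simp
  qed
  with True assms show ?thesis by (simp add: collapsed_pos)
qed (simp add: collapsed_def)

lemma collapsed_at_reached_output:
  assumes "0 < p z0" and "0 < q z0 t"
  shows "collapsed z t = (if z \<in> ratio_class z0 then qT p q t / class_mass z0 else 0)"
proof (cases "0 < p z")
  case True
  have reached_iff: "t \<in> Tq q (ratio_class z) \<longleftrightarrow> z \<in> ratio_class z0"
  proof
    assume "t \<in> Tq q (ratio_class z)"
    then have "z0 \<in> ratio_class z"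
      using assms(2) by (rule mem_ratio_class_if_output_in_Tq)
    then show "z \<in> ratio_class z0" by (rule mem_ratio_class_sym)
  next
    assume "z \<in> ratio_class z0"
    then have "z0 \<in> ratio_class z" by (rule mem_ratio_class_sym)
    with assms(2) show "t \<in> Tq q (ratio_class z)" by (auto simp: Tq_def)
  qed
  show ?thesis
  proof (cases "z \<in> ratio_class z0")
    case True
    then have "ratio_class z = ratio_class z0" by (rule ratio_class_eq)
    with True \<open>0 < p z\<close> reached_iff show ?thesis
      by (simp add: collapsed_pos class_mass_def)
  next
    case False
    with \<open>0 < p z\<close> reached_iff show ?thesis by (simp add: collapsed_pos)
  qed
next
  case False
  have "z \<notin> ratio_class z0"
  proof
    assume "z \<in> ratio_class z0"
    with assms(1) False show False
      using pos_iff_mem_ratio_class[of z z0] by simp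
  qed
  then show ?thesis
    using False q_eq_0_if_not_mem_ratio_class[OF assms(2)] by (simp add: collapsed_def)
qed

lemma push_collapsed:
  assumes proportional: "\<And>z z'. 0 < p z \<Longrightarrow> z' \<in> ratio_class z \<Longrightarrow> w z' * p z = w z * p z'"
  shows "push collapsed w = push q w"
proof
  fix t
  show "push collapsed w t = push q w t"
  proof (cases "\<exists>z0. 0 < p z0 \<and> 0 < q z0 t")
    case True
    then obtain z0 where z0: "0 < p z0" "0 < q z0 t" by blast
    define r where "r = w z0 / p z0"
    have w_eq: "w z = r * p z" if "z \<in> ratio_class z0" for z
      using proportional[OF z0(1) that] z0(1) by (simp add: r_def field_simps)
    have "push collapsed w t
        = (\<Sum>z\<in>UNIV. if z \<in> ratio_class z0 then qT p q t / class_mass z0 * w z else 0)"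
      unfolding push_def collapsed_at_reached_output[OF z0] by (intro sum.cong) auto
    also have "\<dots> = (\<Sum>z\<in>ratio_class z0. qT p q t / class_mass z0 * w z)"
      using sum.inter_restrict[of UNIV "\<lambda>z. qT p q t / class_mass z0 * w z" "ratio_class z0"]
      by simp
    also have "\<dots> = qT p q t / class_mass z0 * (r * class_mass z0)"
      by (simp add: w_eq class_mass_def sum_distrib_left)
    also have "\<dots> = r * qT p q t"
      using class_mass_pos[OF z0(1)] by simp
    also have "\<dots> = (\<Sum>z\<in>ratio_class z0. q z t * w z)"
      by (simp add: qT_eq_sum_ratio_class[OF z0(2)] w_eq sum_distrib_left mult_ac)
    also have "\<dots> = push q w t"
      unfolding push_def
      by (intro sum.mono_neutral_left) (auto simp: q_eq_0_if_not_mem_ratio_class[OF z0(2)])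
    finally show ?thesis .
  next
    case False
    have "q z t = 0" if "0 < p z" for z
    proof -
      have "\<not> 0 < q z t" using False that by blast
      then show ?thesis using q_nonneg[of z t] by simp
    qed
    then show ?thesis
      unfolding push_def by (simp add: collapsed_at_unreached_output)
  qed
qed

lemma push_collapsed_self: "push collapsed p = push q p"
  by (rule push_collapsed) (simp add: mult.commute)

lemma push_collapsed_prod_marg: "push collapsed (prod_marg p) = push q (prod_marg p)"
proof (rule push_collapsed)
  fix z z' assume "z' \<in> ratio_class z"
  then have "p z / prod_marg p z = p z' / prod_marg p z'"
    by (simp add: ratio_rel_def)
  then show "prod_marg p z' * p z = prod_marg p z * p z'"
    using prod_marg_pos[of z] prod_marg_pos[of z'] by (simp add: field_simps)
qed

lemma collapsed_log_term:
  "p z * collapsed z t * ln (p z * collapsed z t / (p z * qT p q t))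
    = p z * ln (1 / class_mass z) * collapsed z t"
proof (cases "0 < p z \<and> t \<in> Tq q (ratio_class z)")
  case True
  then have "0 < qT p q t" and "0 < class_mass z"
    using qT_pos[of z t] class_mass_pos[of z] by auto
  then have "p z * (qT p q t / class_mass z) / (p z * qT p q t) = 1 / class_mass z"
    using True by simp
  with True show ?thesis by (simp add: collapsed_pos)
next
  case False
  then have "p z = 0 \<or> collapsed z t = 0"
    using p_nonneg[of z] collapsed_pos[of z t] by (cases "0 < p z") auto
  then show ?thesis by auto
qed

lemma mutual_info_collapsed: "mutual_info p collapsed = ereal (\<Sum>z\<in>UNIV. p z * ln (1 / class_mass z))"
proof -
  let ?P = "\<lambda>(z, t). p z * collapsed z t" and ?Q = "\<lambda>(z, t). p z * push collapsed p t"
  have "((\<lambda>t. p z * ln (1 / class_mass z) * collapsed z t) has_sum p z * ln (1 / class_mass z) * 1) UNIV"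
    for z
    by (rule has_sum_cmult_right[OF collapsed_has_sum])
  then have "((\<lambda>(z, t). p z * ln (1 / class_mass z) * collapsed z t)
          has_sum (\<Sum>z\<in>UNIV. p z * ln (1 / class_mass z) * 1)) (UNIV \<times> UNIV)"
    by (intro has_sum_Sigma_finite) auto
  moreover have "(\<lambda>w. ?P w * ln (?P w / ?Q w)) = (\<lambda>(z, t). p z * ln (1 / class_mass z) * collapsed z t)"
  proof
    fix w :: "('a \<times> 'b) \<times> nat"
    show "?P w * ln (?P w / ?Q w) = (\<lambda>(z, t). p z * ln (1 / class_mass z) * collapsed z t) w"
      using collapsed_log_term[of "fst w" "snd w"]
      by (simp add: case_prod_beta push_collapsed_self qT_eq_push)
  qed
  ultimately have "((\<lambda>w. ?P w * ln (?P w / ?Q w)) has_sum (\<Sum>z\<in>UNIV. p z * ln (1 / class_mass z))) UNIV"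
    by simp
  moreover have "\<not> (\<exists>w. 0 < ?P w \<and> ?Q w = 0)"
  proof clarify
    fix z t assume "0 < p z * collapsed z t" "p z * push collapsed p t = 0"
    then have "0 < p z" and "t \<in> Tq q (ratio_class z)"
      using p_nonneg[of z] channel_collapsed
      by (auto simp: zero_less_mult_iff collapsed_pos split: if_splits)
    then show False
      using qT_pos[of z t] \<open>p z * push collapsed p t = 0\<close> by (simp add: push_collapsed_self qT_eq_push)
  qed
  ultimately show ?thesis
    unfolding mutual_info_def by (rule kl_eq_ereal_if_has_sum[rotated])
qed

lemma tangent_correction_has_sum:
  "((\<lambda>(z, t). p z * (q z t * ln (1 / class_mass z) + q z t - collapsed z t))
      has_sum (\<Sum>z\<in>UNIV. p z * ln (1 / class_mass z))) UNIV"
proof -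
  have "((\<lambda>t. q z t * ln (1 / class_mass z) + q z t - collapsed z t)
          has_sum (1 * ln (1 / class_mass z) + 1 - 1)) UNIV" for z
    by (intro has_sum_diff has_sum_add has_sum_cmult_left q_has_sum collapsed_has_sum)
  then have "((\<lambda>t. p z * (q z t * ln (1 / class_mass z) + q z t - collapsed z t))
          has_sum p z * ln (1 / class_mass z)) UNIV" for z
    using has_sum_cmult_right by fastforce
  then have "((\<lambda>(z, t). p z * (q z t * ln (1 / class_mass z) + q z t - collapsed z t))
      has_sum (\<Sum>z\<in>UNIV. p z * ln (1 / class_mass z))) (UNIV \<times> UNIV)"
    by (intro has_sum_Sigma_finite) auto
  then show ?thesis by simp
qed

lemma collapsed_tangent_bound:
  assumes "0 < p z"
  shows "q z t * ln (1 / class_mass z) + q z t - collapsed z t \<le> q z t * ln (q z t / qT p q t)"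
    and "q z t * ln (q z t / qT p q t) = q z t * ln (1 / class_mass z) + q z t - collapsed z t
         \<Longrightarrow> q z t = collapsed z t"
proof -
  let ?x = "q z t" and ?y = "qT p q t" and ?c = "1 / class_mass z"
  have "?x * ln ?c + ?x - collapsed z t \<le> ?x * ln (?x / ?y)
    \<and> (?x * ln (?x / ?y) = ?x * ln ?c + ?x - collapsed z t \<longrightarrow> ?x = collapsed z t)"
  proof (cases "t \<in> Tq q (ratio_class z)")
    case True
    have "0 < ?y" and "0 < ?c"
      using qT_pos[OF assms True] class_mass_pos[OF assms] by simp_all
    moreover have "collapsed z t = ?c * ?y"
      using assms True by (simp add: collapsed_pos)
    ultimately show ?thesis
      using x_ln_div_ge_tangent[of ?x ?y ?c] x_ln_div_eq_tangentD[of ?x ?y ?c] q_nonneg by simp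
  next
    case False
    have "z \<in> ratio_class z" by (simp add: ratio_rel_def)
    then have "?x = 0"
      using False by (rule q_eq_0_if_not_in_Tq)
    with assms False show ?thesis by (simp add: collapsed_pos)
  qed
  then show "?x * ln ?c + ?x - collapsed z t \<le> ?x * ln (?x / ?y)"
    and "?x * ln (?x / ?y) = ?x * ln ?c + ?x - collapsed z t \<Longrightarrow> ?x = collapsed z t"
    by auto
qed

lemma eq_collapsed_if_mutual_info_le:
  assumes "mutual_info p q \<le> mutual_info p collapsed" and "0 < p z"
  shows "q z t = collapsed z t"
proof -
  define M where "M = (\<Sum>z\<in>UNIV. p z * ln (1 / class_mass z))"
  let ?P = "\<lambda>(z, t). p z * q z t" and ?Q = "\<lambda>(z, t). p z * push q p t"
  define F where "F = (\<lambda>w. ?P w * ln (?P w / ?Q w))"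
  \<comment> \<open>L sums to the mutual information of the collapsed channel, while F - L is p times the
    nonnegative gap of collapsed_tangent_bound.\<close>
  define L where "L = (\<lambda>(z, t). p z * (q z t * ln (1 / class_mass z) + q z t - collapsed z t))"
  have "mutual_info p q \<le> ereal M"
    using assms(1) by (simp add: mutual_info_collapsed M_def)
  then have "kl ?P ?Q \<le> ereal M"
    by (simp add: mutual_info_def)
  from kl_le_ereal_imp_summable[OF this]
  have F_summable: "F summable_on UNIV" and F_le: "infsum F UNIV \<le> M"
    unfolding F_def .
  have "(L has_sum M) UNIV"
    unfolding L_def M_def by (rule tangent_correction_has_sum)
  with F_summable have gap_sum: "((\<lambda>w. F w - L w) has_sum (infsum F UNIV - M)) UNIV"
    by (intro has_sum_diff) simp_all
  have gap_eq: "F (z', t') - L (z', t')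
      = p z' * (q z' t' * ln (q z' t' / qT p q t')
                - (q z' t' * ln (1 / class_mass z') + q z' t' - collapsed z' t'))" for z' t'
    by (cases "p z' = 0") (simp_all add: F_def L_def qT_eq_push algebra_simps)
  have gap_nonneg: "0 \<le> F w - L w" for w
  proof (cases w)
    case (Pair z' t')
    show ?thesis
    proof (cases "0 < p z'")
      case True
      then show ?thesis
        unfolding Pair gap_eq using collapsed_tangent_bound(1)[OF True, of t'] by simp
    next
      case False
      then have "p z' = 0" using p_nonneg[of z'] by simp
      then show ?thesis unfolding Pair gap_eq by simp
    qed
  qed
  have "F (z, t) - L (z, t) = 0"
    using nonneg_has_sum_le_0D[OF gap_sum _ gap_nonneg UNIV_I] F_le by simp
  then show ?thesis
    unfolding gap_eq using assms(2) collapsed_tangent_bound(2)[OF assms(2), of t] by simp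
qed

end

theorem lemma13:
  fixes p :: "'a::finite \<times> 'b::finite \<Rightarrow> real"
    and q :: "'a \<times> 'b \<Rightarrow> nat \<Rightarrow> real"
  assumes "is_distr p"
    and "\<forall>x. margX p x > 0"
    and "\<forall>y. margY p y > 0"
    and "iib_solution p (kl p (prod_marg p)) q"
  shows "\<forall>z \<in> supp p. \<forall>t::nat.
           q z t = (\<Sum>C\<in>supp_classes p. qCond p q (Tq q C) t * (if z \<in> C then 1 else 0))"
proof -
  have p_nonneg: "\<And>z. 0 \<le> p z"
    using assms(1) unfolding is_distr_def by blast
  have marg_pos: "\<And>z. 0 < prod_marg p z"
    using assms(2,3) by (simp add: prod_marg_def)
  have q: "channel q" and feasible: "kl (push q p) (push q (prod_marg p)) = kl p (prod_marg p)"
    and optimal: "\<And>\<kappa>. channel \<kappa> \<Longrightarrow> kl (push \<kappa> p) (push \<kappa> (prod_marg p)) = kl p (prod_marg p)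
                    \<Longrightarrow> mutual_info p q \<le> mutual_info p \<kappa>"
    using assms(4) unfolding iib_solution_def by auto
  interpret ratio_determined_channel p q
  proof
    show "(z, z') \<in> ratio_rel p" if "0 < q z t" "0 < q z' t" for z z' t
      using kl_push_eq_imp_ratio_eq[OF q p_nonneg marg_pos feasible] that
      by (simp add: ratio_rel_def)
  qed (use p_nonneg marg_pos q in auto)
  have "mutual_info p q \<le> mutual_info p collapsed"
    using optimal[OF channel_collapsed] feasible
    by (simp add: push_collapsed_self push_collapsed_prod_marg)
  then have "q z t = collapsed z t" if "z \<in> supp p" for z t
    using that by (intro eq_collapsed_if_mutual_info_le) (simp_all add: supp_def)
  then show ?thesis
    using sum_supp_classes_indicator[OF marg_pos] by (simp add: collapsed_def supp_def)
qed

end
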